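(* Let $A$ be a finite group of order $n\geq 2$. The number of subsets $S\subseteq A$ for which there exist subgroups $H,K$ of $A$ with $1<H\leq K<A$ such that $S\setminus K$ is a union of left $H$-cosets is at most $2^{3n/4+2(\log_2 n)^2}$. The same bound holds with right $H$-cosets in place of left $H$-cosets. *)

theory Defs
  imports "HOL-Algebra.Algebra"
begin

definition left_coset_union_set :: "('a, 'b) monoid_scheme \<Rightarrow> 'a set set" where
  "left_coset_union_set G = {S. S \<subseteq> carrier G \<and>
     (\<exists>H K. subgroup H G \<and> subgroup K G \<and> {\<one>\<^bsub>G\<^esub>} \<subset> H \<and> H \<subseteq> K \<and> K \<subset> carrier G \<and>
        (\<exists>C \<subseteq> lcosets\<^bsub>G\<^esub> H. S - K = \<Union>C))}"

definition right_coset_union_set :: "('a, 'b) monoid_scheme \<Rightarrow> 'a set set" where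
  "right_coset_union_set G = {S. S \<subseteq> carrier G \<and>
     (\<exists>H K. subgroup H G \<and> subgroup K G \<and> {\<one>\<^bsub>G\<^esub>} \<subset> H \<and> H \<subseteq> K \<and> K \<subset> carrier G \<and>
        (\<exists>C \<subseteq> rcosets\<^bsub>G\<^esub> H. S - K = \<Union>C))}"

end

theory Submission
  imports Defs
begin

text \<open>Outside K, a set S of the family is a union of H-cosets disjoint from K; as |H| \<ge> 2
  there are at most (n - |K|)/2 such cosets, while S \<inter> K is arbitrary. Since K is a proper
  subgroup, |K| \<le> n/2, so for fixed (H, K) there are at most 2^(|K| + (n - |K|)/2) \<le> 2^(3n/4)
  sets. Every subgroup of a group of order n is generated by at most log2 n elements (each new
  generator at least doubles the generated subgroup), so there are at most n^(log2 n) subgroups,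
  and hence at most 2^(2 (log2 n)^2) pairs (H, K).\<close>

lemma card_UN_le_card_mult:
  assumes "finite I" and "\<And>i. i \<in> I \<Longrightarrow> real (card (A i)) \<le> B"
  shows "real (card (\<Union>i \<in> I. A i)) \<le> real (card I) * B"
proof -
  have "real (card (\<Union>i \<in> I. A i)) \<le> (\<Sum>i \<in> I. real (card (A i)))"
    using card_UN_le[OF assms(1), of A] by (simp flip: of_nat_sum)
  also have "\<dots> \<le> (\<Sum>i \<in> I. B)" using assms(2) by (rule sum_mono)
  finally show ?thesis by simp
qed

lemma card_disjoint_family_le_half:
  assumes "finite V" and "\<And>b. b \<in> D \<Longrightarrow> b \<subseteq> V \<and> 2 \<le> card b" and "pairwise disjnt D"
  shows "2 * card D \<le> card V"
proof -
  have "D \<subseteq> Pow V" using assms(2) by blast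
  then have fin: "finite D" "\<And>b. b \<in> D \<Longrightarrow> finite b"
    using \<open>finite V\<close> by (auto intro: finite_subset)
  have "2 * card D = (\<Sum>b\<in>D. 2)" by simp
  also have "\<dots> \<le> (\<Sum>b\<in>D. card b)" using assms(2) by (intro sum_mono) auto
  also have "\<dots> = card (\<Union>D)" using card_Union_disjoint[OF assms(3)] fin by simp
  also have "\<dots> \<le> card V" using assms(1,2) by (intro card_mono) auto
  finally show ?thesis .
qed

lemma card_subsets_Union_outside_le:
  assumes "finite U" and "K \<subseteq> U"
    and blocks: "\<And>b. b \<in> B \<Longrightarrow> b \<subseteq> U \<and> 2 \<le> card b" and "pairwise disjnt B"
  shows "card {S. S \<subseteq> U \<and> (\<exists>C\<subseteq>B. S - K = \<Union>C)} \<le> 2 ^ (card K + (card U - card K) div 2)"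
proof -
  define D where "D = {b \<in> B. b \<inter> K = {}}"
  have finK: "finite K" using finite_subset[OF assms(2,1)] .
  have finD: "finite D" using assms(1) blocks finite_subset[of D "Pow U"] by (auto simp: D_def)
  have "{S. S \<subseteq> U \<and> (\<exists>C\<subseteq>B. S - K = \<Union>C)} \<subseteq> (\<lambda>(A, C). A \<union> \<Union>C) ` (Pow K \<times> Pow D)"
  proof
    fix S assume "S \<in> {S. S \<subseteq> U \<and> (\<exists>C\<subseteq>B. S - K = \<Union>C)}"
    then obtain C where "C \<subseteq> B" "S - K = \<Union>C" by auto
    then have "C \<subseteq> D" and "S = (S \<inter> K) \<union> \<Union>C" by (auto simp: D_def)
    then show "S \<in> (\<lambda>(A, C). A \<union> \<Union>C) ` (Pow K \<times> Pow D)"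
      by (intro image_eqI[of _ _ "(S \<inter> K, C)"]) auto
  qed
  then have "card {S. S \<subseteq> U \<and> (\<exists>C\<subseteq>B. S - K = \<Union>C)}
      \<le> card ((\<lambda>(A, C). A \<union> \<Union>C) ` (Pow K \<times> Pow D))"
    using finK finD by (intro card_mono) auto
  also have "\<dots> \<le> card (Pow K \<times> Pow D)" by (rule card_image_le) (use finK finD in auto)
  also have "\<dots> = 2 ^ (card K + card D)"
    using finK finD by (simp add: card_cartesian_product card_Pow power_add)
  also have "\<dots> \<le> 2 ^ (card K + (card U - card K) div 2)"
  proof -
    have "2 * card D \<le> card (U - K)"
      using assms(1) blocks \<open>pairwise disjnt B\<close>
      by (intro card_disjoint_family_le_half) (auto simp: D_def pairwise_def)
    then show ?thesis using card_Diff_subset[OF finK assms(2)] by simp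
  qed
  finally show ?thesis .
qed

context group
begin

lemma card_subgroup_psubset_double:
  assumes "finite (carrier G)" and "subgroup J G" and "subgroup J' G" and "J \<subset> J'"
  shows "2 * card J \<le> card J'"
proof -
  obtain k where k: "k \<in> J'" "k \<notin> J" using assms(4) by blast
  have kG: "k \<in> carrier G" and JG: "J \<subseteq> carrier G"
    using subgroup.subset[OF assms(3)] subgroup.subset[OF assms(2)] k(1) by blast+
  have coset: "k <# J \<in> lcosets J" using kG unfolding LCOSETS_def by blast
  have "J \<in> lcosets J" using lcos_mult_one[OF JG] unfolding LCOSETS_def by force
  moreover have "k <# J \<noteq> J" using lcos_self[OF kG assms(2)] k(2) by blast
  ultimately have disj: "J \<inter> (k <# J) = {}" using lcos_disjoint[OF assms(2) _ coset] by blast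
  have fin: "finite J" "finite (k <# J)" "finite J'"
    using finite_subset[OF JG assms(1)] finite_subset[OF l_coset_subset_G[OF JG kG] assms(1)]
      finite_subset[OF subgroup.subset[OF assms(3)] assms(1)] by simp_all
  have "2 * card J = card (J \<union> (k <# J))"
    using card_Un_disjoint[OF fin(1,2) disj] l_card_cosets_equal[OF coset JG assms(1)] by simp
  also have "\<dots> \<le> card J'"
    using assms(3,4) k(1) fin(3) unfolding l_coset_def
    by (intro card_mono) (auto intro: subgroup.m_closed)
  finally show ?thesis .
qed

lemma subgroup_small_generating_extension:
  assumes "finite (carrier G)" and "subgroup K G"
  shows "Z \<subseteq> K \<Longrightarrow> finite Z \<Longrightarrow> 2 ^ card Z \<le> card (generate G Z) \<Longrightarrow>
     \<exists>Y. Z \<subseteq> Y \<and> Y \<subseteq> K \<and> finite Y \<and> 2 ^ card Y \<le> card K \<and> generate G Y = K"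
proof (induction "card K - card (generate G Z)" arbitrary: Z rule: less_induct)
  case less
  have KG: "K \<subseteq> carrier G" using subgroup.subset[OF assms(2)] .
  have finK: "finite K" using finite_subset[OF KG assms(1)] .
  have gen_K: "generate G Z \<subseteq> K" using generate_subgroup_incl[OF less.prems(1) assms(2)] .
  show ?case
  proof (cases "generate G Z = K")
    case True
    then show ?thesis using less.prems by blast
  next
    case False
    then obtain k where k: "k \<in> K" "k \<notin> generate G Z" using gen_K by blast
    have "k \<notin> Z" using k(2) generate.incl[of k Z G] by blast
    then have card_Z': "card (insert k Z) = Suc (card Z)" using less.prems(2) by simp
    have Z'K: "insert k Z \<subseteq> K" using k(1) less.prems(1) by blast
    have gen_psubset: "generate G Z \<subset> generate G (insert k Z)"
      using mono_generate[of Z "insert k Z"] generate.incl[of k "insert k Z" G] k(2) by blast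
    have gen_K': "generate G (insert k Z) \<subseteq> K" using generate_subgroup_incl[OF Z'K assms(2)] .
    have "2 * card (generate G Z) \<le> card (generate G (insert k Z))"
      using Z'K less.prems(1) KG gen_psubset
      by (intro card_subgroup_psubset_double[OF assms(1)] generate_is_subgroup) auto
    then have "2 ^ card (insert k Z) \<le> card (generate G (insert k Z))"
      using less.prems(3) card_Z' by simp
    moreover have "card K - card (generate G (insert k Z)) < card K - card (generate G Z)"
      using psubset_card_mono[OF finite_subset[OF gen_K' finK] gen_psubset]
        card_mono[OF finK gen_K'] by linarith
    ultimately obtain Y where "insert k Z \<subseteq> Y \<and> Y \<subseteq> K \<and> finite Y \<and> 2 ^ card Y \<le> card K \<and> generate G Y = K"
      using less.hyps Z'K less.prems(2) by (metis finite_insert)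
    then show ?thesis by blast
  qed
qed

lemma subgroup_small_generating_set:
  assumes "finite (carrier G)" and "subgroup K G"
  obtains Y where "Y \<subseteq> K" "finite Y" "2 ^ card Y \<le> card K" "generate G Y = K"
  using subgroup_small_generating_extension[OF assms, of "{}"] by (auto simp: generate_empty)

lemma generate_insert_one:
  assumes "Z \<subseteq> carrier G"
  shows "generate G (insert \<one> Z) = generate G Z"
proof
  show "generate G Z \<subseteq> generate G (insert \<one> Z)" by (rule mono_generate) auto
  show "generate G (insert \<one> Z) \<subseteq> generate G Z"
    by (rule generate_subgroup_incl) (auto intro: generate.one generate.incl generate_is_subgroup[OF assms])
qed

lemma card_subgroups_le_power:
  assumes "finite (carrier G)" and "card (carrier G) < 2 ^ Suc L"
  shows "card {H. subgroup H G} \<le> card (carrier G) ^ L"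
proof -
  let ?lists = "{xs. set xs \<subseteq> carrier G \<and> length xs = L}"
  have "{H. subgroup H G} \<subseteq> (\<lambda>xs. generate G (set xs)) ` ?lists"
  proof
    fix K assume "K \<in> {H. subgroup H G}"
    then have K: "subgroup K G" by simp
    obtain Y where Y: "Y \<subseteq> K" "finite Y" "2 ^ card Y \<le> card K" "generate G Y = K"
      using subgroup_small_generating_set[OF assms(1) K] .
    have KG: "K \<subseteq> carrier G" using subgroup.subset[OF K] .
    then have YG: "Y \<subseteq> carrier G" using Y(1) by blast
    have "card K \<le> card (carrier G)" using card_mono[OF assms(1) KG] .
    then have "2 ^ card Y < (2::nat) ^ Suc L" using Y(3) assms(2) by linarith
    then have "card Y < Suc L" by (rule power_less_imp_less_exp[rotated]) simp
    then have card_Y: "card Y \<le> L" by simp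
    obtain ys where ys: "set ys = Y" "length ys = card Y"
      using Y(2) distinct_card finite_distinct_list by metis
    define xs where "xs = ys @ replicate (L - card Y) \<one>"
    have "set xs = Y \<or> set xs = insert \<one> Y" unfolding xs_def using ys by auto
    then have "generate G (set xs) = K" using generate_insert_one[OF YG] Y(4) by auto
    moreover have "xs \<in> ?lists" using card_Y ys YG unfolding xs_def by auto
    ultimately show "K \<in> (\<lambda>xs. generate G (set xs)) ` ?lists" by blast
  qed
  then have "card {H. subgroup H G} \<le> card ((\<lambda>xs. generate G (set xs)) ` ?lists)"
    using assms(1) by (intro card_mono) (auto simp: finite_lists_length_eq)
  also have "\<dots> \<le> card ?lists" by (rule card_image_le) (use assms(1) in \<open>auto simp: finite_lists_length_eq\<close>)
  also have "\<dots> = card (carrier G) ^ L" using card_lists_length_eq[OF assms(1)] by simp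
  finally show ?thesis .
qed

lemma card_subgroups_le:
  assumes "finite (carrier G)" and "card (carrier G) \<ge> 2"
  shows "real (card {H. subgroup H G}) \<le> 2 powr ((log 2 (card (carrier G)))\<^sup>2)"
proof -
  define n where "n = card (carrier G)"
  define L where "L = nat \<lfloor>log 2 n\<rfloor>"
  have n2: "real n \<ge> 2" using assms(2) n_def by simp
  then have log_ge_1: "log 2 n \<ge> 1" by simp
  then have L: "real L \<le> log 2 n" "log 2 n < real (Suc L)" unfolding L_def by linarith+
  have "real n < 2 powr real (Suc L)" using L(2) n2 by (simp add: log_less_iff)
  also have "\<dots> = real (2 ^ Suc L)" by (subst powr_realpow) auto
  finally have "n < 2 ^ Suc L" by (simp only: of_nat_less_iff)
  then have "card {H. subgroup H G} \<le> n ^ L" using card_subgroups_le_power[OF assms(1)] n_def by simp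
  then have "real (card {H. subgroup H G}) \<le> real n ^ L" by (simp only: of_nat_le_iff of_nat_power[symmetric])
  also have "\<dots> = (2 powr log 2 n) powr real L" using n2 by (simp add: powr_realpow)
  also have "\<dots> = 2 powr (real L * log 2 n)" by (simp add: powr_powr mult.commute)
  also have "\<dots> \<le> 2 powr ((log 2 n)\<^sup>2)"
    using L(1) log_ge_1 by (intro powr_mono) (auto simp: power2_eq_square intro: mult_right_mono)
  finally show ?thesis unfolding n_def .
qed

lemma lcosets_disjoint_same_card:
  assumes "subgroup H G" and "finite (carrier G)"
  shows "(\<forall>c \<in> lcosets H. c \<subseteq> carrier G \<and> card c = card H) \<and> pairwise disjnt (lcosets H)"
  using subgroup.lcosets_carrier[OF assms(1) is_group] l_card_cosets_equal[OF _ subgroup.subset assms(2)]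
    lcos_disjoint[OF assms(1)] assms(1) by (auto simp: pairwise_def disjnt_def)

lemma rcosets_disjoint_same_card:
  assumes "subgroup H G" and "finite (carrier G)"
  shows "(\<forall>c \<in> rcosets H. c \<subseteq> carrier G \<and> card c = card H) \<and> pairwise disjnt (rcosets H)"
proof -
  have "card c = card H" if "c \<in> rcosets H" for c
    using card_cosets_equal[OF that subgroup.subset[OF assms(1)]] bij_betw_same_card by metis
  then show ?thesis using rcosets_part_G[OF assms(1)] rcos_disjoint[OF assms(1)] by auto
qed

lemma card_unions_of_blocks_outside_le:
  assumes "finite (carrier G)" and "subgroup H G" and "subgroup K G"
    and "{\<one>} \<subset> H" and "K \<subset> carrier G"
    and "\<And>c. c \<in> blocks \<Longrightarrow> c \<subseteq> carrier G \<and> card c = card H" and "pairwise disjnt blocks"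
  shows "real (card {S. S \<subseteq> carrier G \<and> (\<exists>C\<subseteq>blocks. S - K = \<Union>C)})
    \<le> 2 powr (3 * real (card (carrier G)) / 4)"
proof -
  let ?n = "card (carrier G)" and ?k = "card K"
  have "card {\<one>} < card H"
    using psubset_card_mono[OF finite_subset[OF subgroup.subset[OF assms(2)] assms(1)] assms(4)] .
  then have "\<And>c. c \<in> blocks \<Longrightarrow> c \<subseteq> carrier G \<and> 2 \<le> card c" using assms(6) by simp
  then have "card {S. S \<subseteq> carrier G \<and> (\<exists>C\<subseteq>blocks. S - K = \<Union>C)} \<le> 2 ^ (?k + (?n - ?k) div 2)"
    using assms(1,5,7) by (intro card_subsets_Union_outside_le) auto
  then have "real (card {S. S \<subseteq> carrier G \<and> (\<exists>C\<subseteq>blocks. S - K = \<Union>C)})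
      \<le> real (2 ^ (?k + (?n - ?k) div 2))"
    by (simp only: of_nat_le_iff)
  also have "\<dots> = 2 powr real (?k + (?n - ?k) div 2)" by (subst powr_realpow) auto
  also have "\<dots> \<le> 2 powr (3 * real ?n / 4)"
  proof -
    have "2 * ?k \<le> ?n"
      using card_subgroup_psubset_double[OF assms(1,3) subgroup_self assms(5)] .
    then show ?thesis by (intro powr_mono) linarith+
  qed
  finally show ?thesis .
qed

lemma card_unions_of_blocks_outside_subgroups_le:
  assumes "finite (carrier G)" and "card (carrier G) \<ge> 2"
    and blocks: "\<And>H. subgroup H G \<Longrightarrow>
      (\<forall>c \<in> blocks H. c \<subseteq> carrier G \<and> card c = card H) \<and> pairwise disjnt (blocks H)"
  shows "real (card {S. S \<subseteq> carrier G \<and> (\<exists>H K. subgroup H G \<and> subgroup K G \<and>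
            {\<one>} \<subset> H \<and> H \<subseteq> K \<and> K \<subset> carrier G \<and> (\<exists>C \<subseteq> blocks H. S - K = \<Union>C))})
    \<le> 2 powr (3 * real (card (carrier G)) / 4 + 2 * (log 2 (card (carrier G)))\<^sup>2)"
    (is "real (card ?F) \<le> _")
proof -
  define B where "B = 2 powr (3 * real (card (carrier G)) / 4)"
  define Sub where "Sub = {H. subgroup H G}"
  define I where "I = {(H, K). H \<in> Sub \<and> K \<in> Sub \<and> {\<one>} \<subset> H \<and> K \<subset> carrier G}"
  define T where "T = (\<lambda>(H, K). {S. S \<subseteq> carrier G \<and> (\<exists>C \<subseteq> blocks H. S - K = \<Union>C)})"
  have finSub: "finite Sub"
    using assms(1) finite_subset[of Sub "Pow (carrier G)"] by (auto simp: Sub_def dest: subgroup.subset)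
  have I_Sub: "I \<subseteq> Sub \<times> Sub" by (auto simp: I_def)
  have "?F \<subseteq> (\<Union>p \<in> I. T p)"
  proof
    fix S assume "S \<in> ?F"
    then obtain H K where "S \<subseteq> carrier G" "subgroup H G" "subgroup K G" "{\<one>} \<subset> H"
      "K \<subset> carrier G" "\<exists>C \<subseteq> blocks H. S - K = \<Union>C" by blast
    then have "(H, K) \<in> I" and "S \<in> T (H, K)" by (simp_all add: I_def Sub_def T_def)
    then show "S \<in> (\<Union>p \<in> I. T p)" by blast
  qed
  moreover have "finite (\<Union>p \<in> I. T p)"
  proof (rule finite_subset[of _ "Pow (carrier G)"])
    show "(\<Union>p \<in> I. T p) \<subseteq> Pow (carrier G)" by (auto simp: T_def split: prod.splits)
  qed (simp add: assms(1))
  ultimately have "real (card ?F) \<le> real (card (\<Union>p \<in> I. T p))" by (simp add: card_mono)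
  also have "\<dots> \<le> real (card I) * B"
  proof (rule card_UN_le_card_mult)
    show "finite I" using finite_subset[OF I_Sub] finSub by blast
  next
    fix p assume "p \<in> I"
    then obtain H K where p: "p = (H, K)" "subgroup H G" "subgroup K G" "{\<one>} \<subset> H" "K \<subset> carrier G"
      by (auto simp: I_def Sub_def)
    show "real (card (T p)) \<le> B"
      unfolding B_def T_def p(1) using blocks[OF p(2)]
      by (auto intro!: card_unions_of_blocks_outside_le[OF assms(1) p(2-5)])
  qed
  also have "\<dots> \<le> real (card Sub) ^ 2 * B"
    using card_mono[OF _ I_Sub] finSub unfolding B_def
    by (intro mult_right_mono) (auto simp: card_cartesian_product power2_eq_square simp flip: of_nat_mult)
  also have "\<dots> \<le> (2 powr ((log 2 (card (carrier G)))\<^sup>2)) ^ 2 * B"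
    using card_subgroups_le[OF assms(1,2)] unfolding Sub_def B_def
    by (intro mult_right_mono power_mono) auto
  also have "\<dots> = 2 powr (3 * real (card (carrier G)) / 4 + 2 * (log 2 (card (carrier G)))\<^sup>2)"
    unfolding B_def by (simp add: powr_power powr_add add.commute)
  finally show ?thesis .
qed

end


theorem lemma5p1:
  fixes G :: "('a, 'b) monoid_scheme"
  assumes "group G" and "finite (carrier G)" and "card (carrier G) \<ge> 2"
  shows "real (card (left_coset_union_set G))
           \<le> 2 powr (3 * real (card (carrier G)) / 4 + 2 * (log 2 (card (carrier G)))\<^sup>2)
    \<and> real (card (right_coset_union_set G))
           \<le> 2 powr (3 * real (card (carrier G)) / 4 + 2 * (log 2 (card (carrier G)))\<^sup>2)"
proof
  interpret group G by fact
  show "real (card (left_coset_union_set G))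
           \<le> 2 powr (3 * real (card (carrier G)) / 4 + 2 * (log 2 (card (carrier G)))\<^sup>2)"
    unfolding left_coset_union_set_def
    using card_unions_of_blocks_outside_subgroups_le[OF assms(2,3)] lcosets_disjoint_same_card[OF _ assms(2)] .
  show "real (card (right_coset_union_set G))
           \<le> 2 powr (3 * real (card (carrier G)) / 4 + 2 * (log 2 (card (carrier G)))\<^sup>2)"
    unfolding right_coset_union_set_def
    using card_unions_of_blocks_outside_subgroups_le[OF assms(2,3)] rcosets_disjoint_same_card[OF _ assms(2)] .
qed

end
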